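(* Let $d,m,n$ be positive integers with $\min\{m,n\}\ge2$ and $d\le mn$, let $M_1,\dots,M_{q_0}$ be all the $2\times2$ minors of $m\times n$ matrices, and let $P_1,P_2:\mathbb{R}^d\to M^{m\times n}$ be linear isomorphisms onto their images with $P_1\sim P_2$. Let $K_j=P_j(\mathbb{R}^d)$, $j=1,2$. Then $K_1$ has no Rank-$1$ connections if and only if $K_2$ has no Rank-$1$ connections, and $\mathrm{Span}\{M_1(P_1(z)),\dots,M_{q_0}(P_1(z))\}=\mathrm{Span}\{M_1(P_2(z)),\dots,M_{q_0}(P_2(z))\}$ as subsets of the polynomial ring $\mathbb{R}[z_1,\dots,z_d]$.
   Context: A linear map $P:\mathbb{R}^d\to M^{m\times n}$ has the form $P(z)=(a_{ij}\cdot z)_{ij}$ with $a_{ij}\in\mathbb{R}^d$ and is viewed as an $m\times n$ matrix with entries in $\mathbb{R}[z_1,\dots,z_d]$. $P_1\sim P_2$ means $P_2(z)$ is obtained from $P_1(z)$, as such matrices, by finitely many elementary row and column operations. A set has Rank-$1$ connections if it contains $A\neq B$ with $\mathrm{Rank}(A-B)=1$. *)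

theory Defs
  imports "HOL-Analysis.Analysis" "HOL-Library.Function_Algebras"
begin

text \<open>A linear map P : R^d -> M^{m x n} is a function real^'d => real^'n^'m
  (row index 'm, column index 'n).  Viewed as an m x n matrix of (linear)
  polynomials in z, elementary row/column operations (with real scalars)
  act pointwise in z.\<close>

definition row_swap :: "'m \<Rightarrow> 'm \<Rightarrow> real^'n^'m \<Rightarrow> real^'n^'m" where
  "row_swap i j A = (\<chi> k. if k = i then A$j else if k = j then A$i else A$k)"

definition row_scale :: "'m \<Rightarrow> real \<Rightarrow> real^'n^'m \<Rightarrow> real^'n^'m" where
  "row_scale i c A = (\<chi> k. if k = i then c *\<^sub>R A$k else A$k)"

definition row_add :: "'m \<Rightarrow> 'm \<Rightarrow> real \<Rightarrow> real^'n^'m \<Rightarrow> real^'n^'m" where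
  "row_add i j c A = (\<chi> k. if k = i then A$i + c *\<^sub>R A$j else A$k)"

definition col_swap :: "'n \<Rightarrow> 'n \<Rightarrow> real^'n^'m \<Rightarrow> real^'n^'m" where
  "col_swap i j A = (\<chi> r l. if l = i then A$r$j else if l = j then A$r$i else A$r$l)"

definition col_scale :: "'n \<Rightarrow> real \<Rightarrow> real^'n^'m \<Rightarrow> real^'n^'m" where
  "col_scale i c A = (\<chi> r l. if l = i then c * A$r$l else A$r$l)"

definition col_add :: "'n \<Rightarrow> 'n \<Rightarrow> real \<Rightarrow> real^'n^'m \<Rightarrow> real^'n^'m" where
  "col_add i j c A = (\<chi> r l. if l = i then A$r$i + c * A$r$j else A$r$l)"

inductive elem_op :: "(real^'n^'m \<Rightarrow> real^'n^'m) \<Rightarrow> bool" where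
  "elem_op (row_swap i j)"
| "c \<noteq> 0 \<Longrightarrow> elem_op (row_scale i c)"
| "i \<noteq> j \<Longrightarrow> elem_op (row_add i j c)"
| "elem_op (col_swap i' j')"
| "c \<noteq> 0 \<Longrightarrow> elem_op (col_scale i' c)"
| "i' \<noteq> j' \<Longrightarrow> elem_op (col_add i' j' c)"

inductive mat_equiv :: "('d \<Rightarrow> real^'n^'m) \<Rightarrow> ('d \<Rightarrow> real^'n^'m) \<Rightarrow> bool" where
  refl: "mat_equiv P P"
| step: "mat_equiv P Q \<Longrightarrow> elem_op f \<Longrightarrow> mat_equiv P (\<lambda>z. f (Q z))"

definition rank1_connections :: "(real^'n^'m) set \<Rightarrow> bool" where
  "rank1_connections K \<longleftrightarrow> (\<exists>A\<in>K. \<exists>B\<in>K. A \<noteq> B \<and> rank (A - B) = 1)"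

definition minor2 :: "'m \<Rightarrow> 'm \<Rightarrow> 'n \<Rightarrow> 'n \<Rightarrow> real^'n^'m \<Rightarrow> real" where
  "minor2 i1 i2 j1 j2 A = A$i1$j1 * A$i2$j2 - A$i1$j2 * A$i2$j1"

text \<open>The polynomials M_k(P(z)), represented as (polynomial) functions of z.\<close>
definition minor_polys :: "('d \<Rightarrow> real^'n^'m) \<Rightarrow> ('d \<Rightarrow> real) set" where
  "minor_polys P = {(\<lambda>z. minor2 i1 i2 j1 j2 (P z)) | i1 i2 j1 j2. i1 \<noteq> i2 \<and> j1 \<noteq> j2}"

definition fspan :: "('d \<Rightarrow> real) set \<Rightarrow> ('d \<Rightarrow> real) set" where
  "fspan S = module.span (\<lambda>c f z. c * f z) S"

end

theory Submission
  imports Defs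
begin

text \<open>Each elementary operation is invertible by an elementary operation of the same kind,
  commutes with differences and preserves rank, so it maps a set with rank-one connections
  onto one with rank-one connections and conversely.  Moreover every 2 x 2 minor of the
  transformed matrix is a linear combination, with constant coefficients, of 2 x 2 minors of
  the original one, so by invertibility the spans of the minors coincide.\<close>

interpretation real_fun: module "\<lambda>c (f::'d \<Rightarrow> real) z. c * f z"
  by unfold_locales (auto simp: fun_eq_iff algebra_simps)

lemma real_fun_span_scale: "f \<in> real_fun.span S \<Longrightarrow> (\<lambda>z. c * f z) \<in> real_fun.span S"
  using real_fun.span_scale by blast

lemma real_fun_span_add:
  assumes "f \<in> real_fun.span S" and "g \<in> real_fun.span S"
  shows "(\<lambda>z. f z + g z) \<in> real_fun.span S"
  using real_fun.span_add[OF assms] by (simp add: plus_fun_def)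

lemma elem_op_inverse:
  assumes "elem_op (f :: real^'n^'m \<Rightarrow> real^'n^'m)"
  obtains g where "elem_op g" and "\<And>A. g (f A) = A"
  using assms
proof (cases rule: elem_op.cases)
  case (1 i j)
  have "row_swap i j (f A) = A" for A by (auto simp: 1 row_swap_def vec_eq_iff)
  then show ?thesis using that elem_op.intros(1) by blast
next
  case (2 c i)
  have "row_scale i (1/c) (f A) = A" for A using 2 by (auto simp: row_scale_def vec_eq_iff)
  then show ?thesis using that elem_op.intros(2)[of "1/c"] 2 by auto
next
  case (3 i j c)
  have "row_add i j (-c) (f A) = A" for A using 3 by (auto simp: row_add_def vec_eq_iff)
  then show ?thesis using that elem_op.intros(3) 3 by blast
next
  case (4 i j)
  have "col_swap i j (f A) = A" for A by (auto simp: 4 col_swap_def vec_eq_iff)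
  then show ?thesis using that elem_op.intros(4) by blast
next
  case (5 c i)
  have "col_scale i (1/c) (f A) = A" for A using 5 by (auto simp: col_scale_def vec_eq_iff)
  then show ?thesis using that elem_op.intros(5)[of "1/c"] 5 by auto
next
  case (6 i j c)
  have "col_add i j (-c) (f A) = A" for A using 6 by (auto simp: col_add_def vec_eq_iff)
  then show ?thesis using that elem_op.intros(6) 6 by blast
qed

lemma elem_op_diff:
  assumes "elem_op (f :: real^'n^'m \<Rightarrow> real^'n^'m)"
  shows "f (A - B) = f A - f B"
  using assms
  by (cases rule: elem_op.cases)
     (auto simp: row_swap_def row_scale_def row_add_def col_swap_def col_scale_def col_add_def
        vec_eq_iff algebra_simps)

lemma rank_le_if_rows_in_span:
  fixes A B :: "real^'n^'m"
  assumes "\<And>k. row k B \<in> span (rows A)"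
  shows "rank B \<le> rank A"
proof -
  have "rows B \<subseteq> span (rows A)" using assms by (auto simp: rows_def)
  then show ?thesis by (metis dim_subset dim_span row_rank_def)
qed

lemma rank_le_if_columns_in_span:
  fixes A B :: "real^'n^'m"
  assumes "\<And>k. column k B \<in> span (columns A)"
  shows "rank B \<le> rank A"
proof -
  have "columns B \<subseteq> span (columns A)" using assms by (auto simp: columns_def)
  then show ?thesis by (metis dim_subset dim_span column_rank_def)
qed

lemma row_in_span_rows: "row k (A :: real^'n^'m) \<in> span (rows A)"
  by (rule span_base) (auto simp: rows_def)

lemma column_in_span_columns: "column k (A :: real^'n^'m) \<in> span (columns A)"
  by (rule span_base) (auto simp: columns_def)

lemma rank_elem_op_le:
  assumes "elem_op (f :: real^'n^'m \<Rightarrow> real^'n^'m)"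
  shows "rank (f A) \<le> rank A"
  using assms
proof (cases rule: elem_op.cases)
  case (1 i j)
  have "row k (f A) = row (if k = i then j else if k = j then i else k) A" for k
    by (auto simp: 1 row_swap_def row_def vec_eq_iff)
  then show ?thesis by (metis rank_le_if_rows_in_span row_in_span_rows)
next
  case (2 c i)
  have "row k (f A) = (if k = i then c else 1) *\<^sub>R row k A" for k
    by (auto simp: 2 row_scale_def row_def vec_eq_iff)
  then show ?thesis by (metis rank_le_if_rows_in_span span_mul row_in_span_rows)
next
  case (3 i j c)
  have "row k (f A) = row k A + (if k = i then c else 0) *\<^sub>R row j A" for k
    by (auto simp: 3 row_add_def row_def vec_eq_iff)
  then show ?thesis by (metis rank_le_if_rows_in_span span_add span_mul row_in_span_rows)
next
  case (4 i j)
  have "column k (f A) = column (if k = i then j else if k = j then i else k) A" for k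
    by (auto simp: 4 col_swap_def column_def vec_eq_iff)
  then show ?thesis by (metis rank_le_if_columns_in_span column_in_span_columns)
next
  case (5 c i)
  have "column k (f A) = (if k = i then c else 1) *\<^sub>R column k A" for k
    by (auto simp: 5 col_scale_def column_def vec_eq_iff)
  then show ?thesis by (metis rank_le_if_columns_in_span span_mul column_in_span_columns)
next
  case (6 i j c)
  have "column k (f A) = column k A + (if k = i then c else 0) *\<^sub>R column j A" for k
    by (auto simp: 6 col_add_def column_def vec_eq_iff)
  then show ?thesis
    by (metis rank_le_if_columns_in_span span_add span_mul column_in_span_columns)
qed

lemma rank_elem_op:
  assumes "elem_op (f :: real^'n^'m \<Rightarrow> real^'n^'m)"
  shows "rank (f A) = rank A"
proof -
  obtain g where "elem_op g" and g_f: "\<And>A. g (f A) = A"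
    using elem_op_inverse[OF assms] by blast
  then have "rank A \<le> rank (f A)" by (metis rank_elem_op_le)
  with rank_elem_op_le[OF assms, of A] show ?thesis by linarith
qed

lemma rank1_connections_elem_op_image:
  assumes "elem_op (f :: real^'n^'m \<Rightarrow> real^'n^'m)"
  shows "rank1_connections (f ` K) \<longleftrightarrow> rank1_connections K"
proof -
  obtain g where "\<And>A. g (f A) = A" using elem_op_inverse[OF assms] by blast
  then have "f A = f B \<longleftrightarrow> A = B" for A B by metis
  then show ?thesis
    unfolding rank1_connections_def
    by (auto simp: rank_elem_op[OF assms] elem_op_diff[OF assms, symmetric])
qed

definition minor_fun :: "'m \<Rightarrow> 'm \<Rightarrow> 'n \<Rightarrow> 'n \<Rightarrow> ('d \<Rightarrow> real^'n^'m) \<Rightarrow> 'd \<Rightarrow> real" where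
  "minor_fun i1 i2 j1 j2 Q = (\<lambda>z. minor2 i1 i2 j1 j2 (Q z))"

text \<open>Degenerate index pairs are allowed: the minor is then identically zero.\<close>

lemma minor_fun_in_span: "minor_fun i1 i2 j1 j2 Q \<in> real_fun.span (minor_polys Q)"
proof (cases "i1 = i2 \<or> j1 = j2")
  case True
  then have "minor_fun i1 i2 j1 j2 Q = 0"
    by (auto simp: minor_fun_def minor2_def fun_eq_iff)
  then show ?thesis using real_fun.span_zero by simp
next
  case False
  then have "minor_fun i1 i2 j1 j2 Q \<in> minor_polys Q"
    by (auto simp: minor_fun_def minor_polys_def)
  then show ?thesis using real_fun.span_superset by blast
qed

lemma minor_fun_elem_op_in_span:
  assumes "elem_op f"
  shows "minor_fun i1 i2 j1 j2 (\<lambda>z. f (Q z)) \<in> real_fun.span (minor_polys Q)"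
  using assms
proof (cases rule: elem_op.cases)
  case (1 i j)
  define s where "s k = (if k = i then j else if k = j then i else k)" for k
  have "minor_fun i1 i2 j1 j2 (\<lambda>z. f (Q z)) = minor_fun (s i1) (s i2) j1 j2 Q"
    by (auto simp: 1 minor_fun_def minor2_def row_swap_def s_def fun_eq_iff)
  then show ?thesis by (simp add: minor_fun_in_span)
next
  case (2 c i)
  define a where "a k = (if k = i then c else 1)" for k
  have "minor_fun i1 i2 j1 j2 (\<lambda>z. f (Q z)) = (\<lambda>z. (a i1 * a i2) * minor_fun i1 i2 j1 j2 Q z)"
    by (auto simp: 2 minor_fun_def minor2_def row_scale_def a_def fun_eq_iff algebra_simps)
  then show ?thesis by (simp add: real_fun_span_scale minor_fun_in_span)
next
  case (3 i j c)
  define a where "a k = (if k = i then c else 0)" for k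
  have "minor_fun i1 i2 j1 j2 (\<lambda>z. f (Q z)) =
      (\<lambda>z. (minor_fun i1 i2 j1 j2 Q z + a i2 * minor_fun i1 j j1 j2 Q z)
         + (a i1 * minor_fun j i2 j1 j2 Q z + (a i1 * a i2) * minor_fun j j j1 j2 Q z))"
    by (auto simp: 3 minor_fun_def minor2_def row_add_def a_def fun_eq_iff algebra_simps)
  then show ?thesis
    by (simp add: real_fun_span_add real_fun_span_scale minor_fun_in_span)
next
  case (4 i j)
  define s where "s k = (if k = i then j else if k = j then i else k)" for k
  have "minor_fun i1 i2 j1 j2 (\<lambda>z. f (Q z)) = minor_fun i1 i2 (s j1) (s j2) Q"
    by (auto simp: 4 minor_fun_def minor2_def col_swap_def s_def fun_eq_iff)
  then show ?thesis by (simp add: minor_fun_in_span)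
next
  case (5 c i)
  define a where "a k = (if k = i then c else 1)" for k
  have "minor_fun i1 i2 j1 j2 (\<lambda>z. f (Q z)) = (\<lambda>z. (a j1 * a j2) * minor_fun i1 i2 j1 j2 Q z)"
    by (auto simp: 5 minor_fun_def minor2_def col_scale_def a_def fun_eq_iff algebra_simps)
  then show ?thesis by (simp add: real_fun_span_scale minor_fun_in_span)
next
  case (6 i j c)
  define a where "a k = (if k = i then c else 0)" for k
  have "minor_fun i1 i2 j1 j2 (\<lambda>z. f (Q z)) =
      (\<lambda>z. (minor_fun i1 i2 j1 j2 Q z + a j2 * minor_fun i1 i2 j1 j Q z)
         + (a j1 * minor_fun i1 i2 j j2 Q z + (a j1 * a j2) * minor_fun i1 i2 j j Q z))"
    by (auto simp: 6 minor_fun_def minor2_def col_add_def a_def fun_eq_iff algebra_simps)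
  then show ?thesis
    by (simp add: real_fun_span_add real_fun_span_scale minor_fun_in_span)
qed

lemma span_minor_polys_elem_op_subset:
  assumes "elem_op f"
  shows "real_fun.span (minor_polys (\<lambda>z. f (Q z))) \<subseteq> real_fun.span (minor_polys Q)"
proof (rule real_fun.span_minimal)
  show "minor_polys (\<lambda>z. f (Q z)) \<subseteq> real_fun.span (minor_polys Q)"
    using minor_fun_elem_op_in_span[OF assms] by (auto simp: minor_polys_def minor_fun_def)
qed simp

lemma fspan_minor_polys_elem_op:
  assumes "elem_op (f :: real^'n^'m \<Rightarrow> real^'n^'m)"
  shows "fspan (minor_polys (\<lambda>z. f (Q z))) = fspan (minor_polys Q)"
proof -
  obtain g where "elem_op g" and g_f: "\<And>A. g (f A) = A"
    using elem_op_inverse[OF assms] by blast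
  then have "real_fun.span (minor_polys Q) \<subseteq> real_fun.span (minor_polys (\<lambda>z. f (Q z)))"
    using span_minor_polys_elem_op_subset[of g "\<lambda>z. f (Q z)"] by simp
  with span_minor_polys_elem_op_subset[OF assms] show ?thesis
    unfolding fspan_def by (rule subset_antisym)
qed

lemma mat_equiv_invariants:
  assumes "mat_equiv P Q"
  shows "(rank1_connections (range P) \<longleftrightarrow> rank1_connections (range Q))
       \<and> fspan (minor_polys P) = fspan (minor_polys Q)"
  using assms
proof (induction rule: mat_equiv.induct)
  case (step P Q f)
  have "range (\<lambda>z. f (Q z)) = f ` range Q" by auto
  with step show ?case
    by (simp add: rank1_connections_elem_op_image fspan_minor_polys_elem_op)
qed simp

theorem lemma3:
  fixes P1 P2 :: "real^'d \<Rightarrow> real^'n^'m"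
  assumes "CARD('m) \<ge> 2" and "CARD('n) \<ge> 2"
    and "CARD('d) \<le> CARD('m) * CARD('n)"
    and "linear P1" and "inj P1"
    and "linear P2" and "inj P2"
    and "mat_equiv P1 P2"
  shows "(\<not> rank1_connections (range P1) \<longleftrightarrow> \<not> rank1_connections (range P2))
       \<and> fspan (minor_polys P1) = fspan (minor_polys P2)"
  using mat_equiv_invariants[OF \<open>mat_equiv P1 P2\<close>] by simp

end
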